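(* Let $n \geq 8$ be an integer. Then the class $\mathcal{Q}$ of functions on $\mathbb{R}^n$ (defined in the context) is empty. That is, there is no function $Q:\mathbb{R}^n\to\mathbb{R}$ of the form $Q(x)=x^TMx$ such that (a) $M\in\mathbb{R}^{n\times n}$ is nonzero, symmetric and nonnegative definite; (b) $Q(Ax)\le Q(x)$ for every $A\in\mathcal{A}$ and every $x\in\mathbb{R}^n$; and (c) $Q(\mathbf{e})=0$.
   Context: Fix a positive integer $n$. Let $\mathbf{e}\in\mathbb{R}^n$ be the vector with all components equal to $1$. A square matrix is stochastic if it is entrywise nonnegative and each row sums to $1$. Let $\mathcal{A}\subset\mathbb{R}^{n\times n}$ be the set of stochastic matrices $A=(a_{ij})$ such that: (i) $a_{ii}>0$ for all $i$; (ii) all positive entries in any given row of $A$ are equal; (iii) $a_{ij}>0$ if and only if $a_{ji}>0$; (iv) the graph on vertex set $\{1,\dots,n\}$ with edge set $\{(i,j): a_{ij}>0\}$ is connected. (These are exactly the matrices of one iteration $x\mapsto Ax$ of the equal-neighbor averaging algorithm on a symmetric connected graph with self-loops, where each node replaces its value by the unweighted average of its neighbors' values, including its own.) The class $\mathcal{Q}$ consists of all functions $Q:\mathbb{R}^n\to\mathbb{R}$ of the form $Q(x)=x^TMx$ where (a) $M$ is nonzero, symmetric and nonnegative definite; (b) $Q(Ax)\le Q(x)$ for all $A\in\mathcal{A}$ and $x\in\mathbb{R}^n$; (c) $Q(\mathbf{e})=0$. *)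

theory Defs
  imports "HOL-Analysis.Analysis"
begin

definition stochastic :: "real^'n^'n \<Rightarrow> bool" where
  "stochastic A \<longleftrightarrow> (\<forall>i j. A $ i $ j \<ge> 0) \<and> (\<forall>i. (\<Sum>j\<in>UNIV. A $ i $ j) = 1)"

definition graph_edges :: "real^'n^'n \<Rightarrow> ('n \<times> 'n) set" where
  "graph_edges A = {(i,j). A $ i $ j > 0}"

definition equal_neighbor_matrices :: "(real^'n^'n) set" where
  "equal_neighbor_matrices = {A. stochastic A
      \<and> (\<forall>i. A $ i $ i > 0)
      \<and> (\<forall>i j k. A $ i $ j > 0 \<longrightarrow> A $ i $ k > 0 \<longrightarrow> A $ i $ j = A $ i $ k)
      \<and> (\<forall>i j. A $ i $ j > 0 \<longleftrightarrow> A $ j $ i > 0)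
      \<and> (\<forall>i j. (i, j) \<in> (graph_edges A)\<^sup>*)}"

definition quad :: "real^'n^'n \<Rightarrow> real^'n \<Rightarrow> real" where
  "quad M x = x \<bullet> (M *v x)"

definition Q_class :: "(real^'n \<Rightarrow> real) set" where
  "Q_class = {Q. \<exists>M :: real^'n^'n.
      Q = quad M
      \<and> M \<noteq> 0 \<and> transpose M = M \<and> (\<forall>x. quad M x \<ge> 0)
      \<and> (\<forall>A\<in>equal_neighbor_matrices. \<forall>x. Q (A *v x) \<le> Q x)
      \<and> Q (\<chi> i. 1) = 0}"

end

theory Submission
  imports Defs
begin

text \<open>Averaging a candidate form Q(x) = x^T M x over all simultaneous permutations of the
  rows and columns of M gives again a form that no equal-neighbor matrix increases, since
  that class is closed under relabelling the vertices. The averaged form is permutation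
  invariant and vanishes on the all-ones vector, so it is a multiple of the variance of x,
  and the multiple is positive because M is a nonzero positive semidefinite matrix. Hence
  the variance itself could never increase under equal-neighbor averaging. For n \<ge> 8 it
  does increase on a double star: one hub with value -5 and three leaves with value 0,
  joined to a second hub with value 11 whose remaining n - 5 leaves have value 6.\<close>

lemma quad_eq_sum: "quad M x = (\<Sum>i\<in>UNIV. \<Sum>j\<in>UNIV. M$i$j * x$i * x$j)"
  unfolding quad_def inner_vec_def matrix_vector_mult_def
  by (simp add: sum_distrib_left mult_ac)

lemma inner_matrix_symmetric:
  "transpose M = M \<Longrightarrow> x \<bullet> (M *v y) = y \<bullet> ((M::real^'n^'n) *v x)"
  by (metis dot_lmul_matrix inner_commute vector_transpose_matrix)

lemma quad_add_scaleR:
  "quad M (x + t *\<^sub>R y) = quad M x + t * (x \<bullet> (M *v y) + y \<bullet> (M *v x)) + t\<^sup>2 * quad M y"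
  unfolding quad_def by (simp add: algebra_simps inner_add_left inner_add_right power2_eq_square)

lemma quad_axis: "quad M (axis k 1) = M$k$k"
  by (simp add: quad_def matrix_vector_mult_basis inner_axis' column_def)

lemma nonneg_quadratic_imp_linear_coeff_zero:
  fixes a b :: real
  assumes "\<And>t. 0 \<le> a * t + b * t\<^sup>2"
  shows "a = 0"
proof (rule ccontr)
  assume "a \<noteq> 0"
  define t where "t = - a / (\<bar>b\<bar> + 1)"
  have "0 < t\<^sup>2" using \<open>a \<noteq> 0\<close> by (simp add: t_def add_pos_nonneg)
  have "b * t\<^sup>2 \<le> \<bar>b\<bar> * t\<^sup>2" by (simp add: mult_right_mono)
  also have "\<dots> < (\<bar>b\<bar> + 1) * t\<^sup>2" using \<open>0 < t\<^sup>2\<close> by simp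
  also have "\<dots> = - a * t" by (simp add: t_def power2_eq_square)
  finally show False using assms[of t] by linarith
qed

lemma psd_quad_eq_0_imp_kernel:
  fixes M :: "real^'n^'n"
  assumes psd: "\<forall>x. 0 \<le> quad M x" and sym: "transpose M = M" and e: "quad M e = 0"
  shows "M *v e = 0"
proof -
  define v where "v = M *v e"
  have "e \<bullet> (M *v v) = v \<bullet> v"
    using inner_matrix_symmetric[OF sym, of e v] by (simp add: v_def)
  then have "0 \<le> (2 * (v \<bullet> v)) * t + quad M v * t\<^sup>2" for t
    using psd[rule_format, of "e + t *\<^sub>R v"] by (simp add: quad_add_scaleR e v_def algebra_simps)
  then have "2 * (v \<bullet> v) = 0" by (rule nonneg_quadratic_imp_linear_coeff_zero)
  then show ?thesis by (simp add: v_def)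
qed

lemma psd_zero_diagonal_imp_zero:
  fixes M :: "real^'n^'n"
  assumes "\<forall>x. 0 \<le> quad M x" "transpose M = M" "\<And>k. M$k$k = 0"
  shows "M = 0"
proof -
  have "column k M = 0" for k
    using psd_quad_eq_0_imp_kernel[OF assms(1,2), of "axis k 1"]
    by (simp add: quad_axis assms(3) matrix_vector_mult_basis)
  then show ?thesis by (simp add: vec_eq_iff column_def)
qed

definition permute_vec :: "('n \<Rightarrow> 'n) \<Rightarrow> real^'n \<Rightarrow> real^'n" where
  "permute_vec p x = (\<chi> i. x$(p i))"

definition permute_mat :: "('n \<Rightarrow> 'n) \<Rightarrow> real^'n^'n \<Rightarrow> real^'n^'n" where
  "permute_mat p A = (\<chi> i j. A$(p i)$(p j))"

lemma permute_vec_matrix_vector_mult: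
  assumes "p permutes (UNIV::'n::finite set)"
  shows "permute_vec p (A *v x) = permute_mat p A *v permute_vec p x"
proof -
  have "(\<Sum>j\<in>UNIV. A$(p i)$j * x$j) = (\<Sum>j\<in>UNIV. A$(p i)$(p j) * x$(p j))" for i
    using sum.permute[OF assms, of "\<lambda>j. A$(p i)$j * x$j"] by (simp add: o_def)
  then show ?thesis
    by (simp add: permute_vec_def permute_mat_def matrix_vector_mult_def vec_eq_iff)
qed

lemma permute_mat_equal_neighbor_matrices:
  assumes p: "p permutes (UNIV::'n::finite set)"
    and A: "A \<in> (equal_neighbor_matrices :: (real^'n^'n) set)"
  shows "permute_mat p A \<in> equal_neighbor_matrices"
proof -
  have st: "stochastic A" and conn: "\<forall>i j. (i, j) \<in> (graph_edges A)\<^sup>*"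
    using A unfolding equal_neighbor_matrices_def by auto
  have "(\<Sum>j\<in>UNIV. A$(p i)$(p j)) = 1" for i
    using sum.permute[OF p, of "\<lambda>j. A$(p i)$j"] st unfolding stochastic_def by (simp add: o_def)
  then have "stochastic (permute_mat p A)"
    using st unfolding stochastic_def permute_mat_def by simp
  moreover have path: "(inv p a, inv p b) \<in> (graph_edges (permute_mat p A))\<^sup>*"
    if "(a, b) \<in> (graph_edges A)\<^sup>*" for a b
    using that
  proof (induction rule: rtrancl_induct)
    case (step y z)
    then have "(inv p y, inv p z) \<in> graph_edges (permute_mat p A)"
      by (simp add: graph_edges_def permute_mat_def permutes_inverses[OF p])
    with step.IH show ?case by (rule rtrancl_into_rtrancl)
  qed simp
  have "(i, j) \<in> (graph_edges (permute_mat p A))\<^sup>*" for i j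
    using path[OF conn[rule_format, of "p i" "p j"]] by (simp add: permutes_inverses[OF p])
  ultimately show ?thesis
    using A by (simp add: equal_neighbor_matrices_def permute_mat_def)
qed

lemma quad_permute_vec:
  assumes p: "p permutes (UNIV::'n::finite set)"
  shows "quad M (permute_vec p x) = quad (permute_mat (inv p) M) x"
proof -
  have "quad (permute_mat (inv p) M) x
      = (\<Sum>i\<in>UNIV. \<Sum>j\<in>UNIV. M$i$(inv p j) * x$(p i) * x$j)"
    using sum.permute[OF p, of "\<lambda>i. \<Sum>j\<in>UNIV. M$(inv p i)$(inv p j) * x$i * x$j"]
    by (simp add: quad_eq_sum permute_mat_def o_def permutes_inverses[OF p])
  also have "\<dots> = (\<Sum>i\<in>UNIV. \<Sum>j\<in>UNIV. M$i$j * x$(p i) * x$(p j))"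
  proof (rule sum.cong[OF refl])
    fix i
    show "(\<Sum>j\<in>UNIV. M$i$(inv p j) * x$(p i) * x$j) = (\<Sum>j\<in>UNIV. M$i$j * x$(p i) * x$(p j))"
      using sum.permute[OF p, of "\<lambda>j. M$i$(inv p j) * x$(p i) * x$j"]
      by (simp add: o_def permutes_inverses[OF p])
  qed
  finally show ?thesis
    by (simp add: quad_eq_sum permute_vec_def)
qed

definition perm_average :: "real^'n^'n \<Rightarrow> real^'n^'n" where
  "perm_average M = (\<Sum>p | p permutes (UNIV::'n set). permute_mat p M)"

lemma perm_average_entry:
  "perm_average M $ i $ j = (\<Sum>p | p permutes (UNIV::'n::finite set). M$(p i)$(p j))"
  by (simp add: perm_average_def permute_mat_def)

lemma quad_sum_left: "quad (sum f S) x = (\<Sum>a\<in>S. quad (f a) x)"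
  using sum_comp_morphism[of "\<lambda>M. quad M x" f S]
  by (simp add: quad_def matrix_vector_mult_add_rdistrib inner_add_right o_def)

lemma sum_quad_permute_vec:
  "(\<Sum>p | p permutes (UNIV::'n::finite set). quad M (permute_vec p x)) = quad (perm_average M) x"
proof -
  have "(\<Sum>p | p permutes (UNIV::'n set). quad M (permute_vec p x))
      = (\<Sum>p | p permutes (UNIV::'n set). quad (permute_mat (inv p) M) x)"
    by (intro sum.cong refl) (simp add: quad_permute_vec)
  also have "\<dots> = (\<Sum>p | p permutes (UNIV::'n set). quad (permute_mat p M) x)"
    by (rule sum_permutations_inverse[symmetric])
  finally show ?thesis
    by (simp add: perm_average_def quad_sum_left)
qed

lemma permute_mat_perm_average:
  assumes "s permutes (UNIV::'n::finite set)"
  shows "permute_mat s (perm_average M) = perm_average M"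
  using sum_permutations_compose_right[OF assms, of "\<lambda>p. M$(p _)$(p _)"]
  by (simp add: vec_eq_iff permute_mat_def perm_average_entry o_def)

lemma permutes_map_pair:
  fixes i j k l :: "'n::finite"
  assumes "i \<noteq> j" "k \<noteq> l"
  obtains s where "s permutes (UNIV::'n set)" "s k = i" "s l = j"
proof
  define t where "t = Transposition.transpose k i"
  define s where "s = Transposition.transpose (t l) j \<circ> t"
  show "s permutes (UNIV::'n set)"
    unfolding s_def t_def by (intro permutes_compose permutes_swap_id) auto
  have "t l \<noteq> i" using assms by (auto simp: t_def Transposition.transpose_def)
  then show "s k = i" "s l = j"
    using assms by (auto simp: s_def t_def Transposition.transpose_def)
qed

lemma permutation_invariant_matrix_entries:
  fixes W :: "real^'n::finite^'n"
  assumes inv: "\<And>s. s permutes (UNIV::'n set) \<Longrightarrow> permute_mat s W = W"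
  obtains w where "\<And>k l. W$k$l = (if k = l then W$i$i else w)"
proof -
  have entry: "W$(s k)$(s l) = W$k$l" if "s permutes (UNIV::'n set)" for s k l
    using arg_cong[OF inv[OF that], of "\<lambda>A. A$k$l"] by (simp add: permute_mat_def)
  have diag: "W$k$k = W$i$i" for k
    using entry[of "Transposition.transpose k i" k k] by (simp add: permutes_swap_id)
  show thesis
  proof (cases "\<exists>j. j \<noteq> i")
    case True
    then obtain j where "i \<noteq> j" by metis
    have "W$k$l = W$i$j" if kl: "k \<noteq> l" for k l
    proof -
      obtain s where "s permutes (UNIV::'n set)" "s k = i" "s l = j"
        using permutes_map_pair[OF \<open>i \<noteq> j\<close> kl] .
      then show ?thesis using entry[of s k l] by simp
    qed
    then show thesis using diag by (intro that[of "W$i$j"]) auto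
  next
    case False
    then have "k = l" for k l :: 'n by metis
    then show thesis using diag by (intro that[of 0]) metis
  qed
qed

(* n^2 times the variance of the entries of y, i.e. the sum of (y_i - y_j)^2 over unordered pairs *)
definition scaled_variance :: "real^'n \<Rightarrow> real" where
  "scaled_variance y = real CARD('n) * (\<Sum>i\<in>UNIV. (y$i)\<^sup>2) - (\<Sum>i\<in>UNIV. y$i)\<^sup>2"

lemma quad_uniform_matrix:
  fixes W :: "real^'n::finite^'n"
  assumes W: "\<And>k l. W$k$l = (if k = l then d else w)"
    and rows: "\<And>k. (\<Sum>j\<in>UNIV. W$k$j) = 0"
  shows "(real CARD('n) - 1) * quad W y = d * scaled_variance y"
proof -
  define S1 S2 where "S1 = (\<Sum>k\<in>UNIV. y$k)" and "S2 = (\<Sum>k\<in>UNIV. (y$k)\<^sup>2)"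
  obtain i :: 'n where True by simp
  have "0 = (\<Sum>j\<in>UNIV. W$i$j)" using rows by simp
  also have "\<dots> = d + (\<Sum>j\<in>UNIV - {i}. w)"
    by (simp add: sum.remove[of UNIV i] W)
  finally have "d + (real CARD('n) - 1) * w = 0"
    by (simp add: card_Diff_singleton of_nat_diff)
  then have dw: "d = - (real CARD('n) - 1) * w" by linarith
  have "quad W y = (\<Sum>k\<in>UNIV. \<Sum>l\<in>UNIV.
      w * y$k * y$l + (if k = l then (d - w) * y$k * y$l else 0))"
    unfolding quad_eq_sum W by (intro sum.cong refl) (auto simp: algebra_simps)
  also have "\<dots> = w * S1\<^sup>2 + (d - w) * S2"
    by (simp add: sum.distrib sum_distrib_left[symmetric] sum_distrib_right[symmetric]
        S1_def S2_def power2_eq_square mult.assoc)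
  finally have q: "quad W y = w * S1\<^sup>2 + (d - w) * S2" .
  show ?thesis
    unfolding scaled_variance_def S1_def[symmetric] S2_def[symmetric] q dw by (simp add: algebra_simps)
qed

lemma perm_average_row_sum:
  fixes M :: "real^'n::finite^'n"
  assumes "\<And>k. (\<Sum>j\<in>UNIV. M$k$j) = 0"
  shows "(\<Sum>j\<in>UNIV. perm_average M $ i $ j) = 0"
proof -
  have "(\<Sum>j\<in>UNIV. M$(p i)$(p j)) = 0" if "p permutes (UNIV::'n set)" for p
    using sum.permute[OF that, of "\<lambda>j. M$(p i)$j"] assms by (simp add: o_def)
  then show ?thesis
    unfolding perm_average_entry by (subst sum.swap) simp
qed

lemma perm_average_diagonal_pos:
  fixes M :: "real^'n::finite^'n"
  assumes psd: "\<forall>x. 0 \<le> quad M x" and sym: "transpose M = M" and "M \<noteq> 0"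
  shows "0 < perm_average M $ i $ i"
proof -
  have diag_nonneg: "0 \<le> M$k$k" for k
    using psd quad_axis by metis
  have "\<exists>k. M$k$k \<noteq> 0"
    using psd_zero_diagonal_imp_zero[OF psd sym] \<open>M \<noteq> 0\<close> by blast
  then obtain k where "0 < M$k$k" using diag_nonneg by (metis less_eq_real_def)
  moreover have "Transposition.transpose i k \<in> {p. p permutes (UNIV::'n set)}"
    by (simp add: permutes_swap_id)
  ultimately show ?thesis
    unfolding perm_average_entry using diag_nonneg
    by (intro sum_pos2[of _ "Transposition.transpose i k"]) (auto simp: finite_permutations)
qed

lemma quad_perm_average_nonincreasing:
  fixes M :: "real^'n::finite^'n"
  assumes mono: "\<forall>A\<in>equal_neighbor_matrices. \<forall>x. quad M (A *v x) \<le> quad M x"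
    and A: "A \<in> equal_neighbor_matrices"
  shows "quad (perm_average M) (A *v x) \<le> quad (perm_average M) x"
  unfolding sum_quad_permute_vec[symmetric]
proof (rule sum_mono)
  fix p assume "p \<in> {p. p permutes (UNIV::'n set)}"
  then have p: "p permutes (UNIV::'n set)" by simp
  show "quad M (permute_vec p (A *v x)) \<le> quad M (permute_vec p x)"
    using mono permute_mat_equal_neighbor_matrices[OF p A]
    by (simp add: permute_vec_matrix_vector_mult[OF p])
qed

lemma Q_class_imp_scaled_variance_nonincreasing:
  assumes Q: "Q \<in> (Q_class :: (real^'n::finite \<Rightarrow> real) set)"
    and A: "A \<in> (equal_neighbor_matrices :: (real^'n^'n) set)"
  shows "scaled_variance (A *v x) \<le> scaled_variance x"
proof -
  obtain M :: "real^'n^'n" where "M \<noteq> 0" and sym: "transpose M = M" and psd: "\<forall>x. 0 \<le> quad M x"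
    and mono: "\<forall>A\<in>equal_neighbor_matrices. \<forall>x. quad M (A *v x) \<le> quad M x"
    and e: "quad M (\<chi> i. 1) = 0"
    using Q unfolding Q_class_def by blast
  have rows: "(\<Sum>j\<in>UNIV. M$k$j) = 0" for k
    using psd_quad_eq_0_imp_kernel[OF psd sym e] by (simp add: vec_eq_iff matrix_vector_mult_def)
  define W where "W = perm_average M"
  obtain i :: 'n where True by simp
  obtain w where "\<And>k l. W$k$l = (if k = l then W$i$i else w)"
    using permutation_invariant_matrix_entries[of W i] permute_mat_perm_average W_def by blast
  then have variance: "(real CARD('n) - 1) * quad W y = W$i$i * scaled_variance y" for y
    by (rule quad_uniform_matrix) (simp add: W_def perm_average_row_sum rows)
  have "(real CARD('n) - 1) * quad W (A *v x) \<le> (real CARD('n) - 1) * quad W x"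
    using quad_perm_average_nonincreasing[OF mono A] by (simp add: W_def mult_left_mono)
  then have "W$i$i * scaled_variance (A *v x) \<le> W$i$i * scaled_variance x"
    by (simp only: variance)
  moreover have "0 < W$i$i"
    using perm_average_diagonal_pos[OF psd sym \<open>M \<noteq> 0\<close>] by (simp add: W_def)
  ultimately show ?thesis by simp
qed

definition neighbor_average :: "('n::finite \<Rightarrow> 'n set) \<Rightarrow> real^'n^'n" where
  "neighbor_average N = (\<chi> i j. if j \<in> N i then 1 / real (card (N i)) else 0)"

lemma neighbor_average_mult:
  "(neighbor_average N *v x)$i = (\<Sum>j\<in>N i. x$j) / real (card (N i))"
proof -
  have "(neighbor_average N *v x)$i = (\<Sum>j\<in>UNIV. if j \<in> N i then x$j / real (card (N i)) else 0)"
    unfolding neighbor_average_def matrix_vector_mult_def by (simp, intro sum.cong refl) auto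
  also have "\<dots> = (\<Sum>j\<in>N i. x$j / real (card (N i)))"
    by (simp add: sum.If_cases)
  finally show ?thesis by (simp add: sum_divide_distrib)
qed

lemma neighbor_average_equal_neighbor_matrices:
  fixes N :: "'n::finite \<Rightarrow> 'n set"
  assumes refl: "\<And>i. i \<in> N i" and sym: "\<And>i j. j \<in> N i \<longleftrightarrow> i \<in> N j"
    and conn: "\<And>i j. (i, j) \<in> {(a, b). b \<in> N a}\<^sup>*"
  shows "neighbor_average N \<in> equal_neighbor_matrices"
proof -
  have card_pos: "0 < card (N i)" for i
    using refl by (metis card_gt_0_iff empty_iff finite)
  have pos: "0 < neighbor_average N $ i $ j \<longleftrightarrow> j \<in> N i" for i j
    using card_pos[of i] by (simp add: neighbor_average_def)
  have "(\<Sum>j\<in>UNIV. neighbor_average N $ i $ j) = 1" for i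
    using neighbor_average_mult[of N "\<chi> j. 1" i] refl[of i]
    by (auto simp: matrix_vector_mult_def)
  then have "stochastic (neighbor_average N)"
    by (simp add: stochastic_def neighbor_average_def)
  moreover have "graph_edges (neighbor_average N) = {(a, b). b \<in> N a}"
    using pos by (auto simp: graph_edges_def)
  ultimately show ?thesis
    using pos refl sym conn card_pos by (auto simp: equal_neighbor_matrices_def neighbor_average_def)
qed

lemma double_star_variance_gain:
  fixes n c :: real
  assumes n: "8 \<le> n" and c: "c = (6 + 6 * (n - 5)) / (n - 3)"
  shows "n * (146 + 36 * (n - 5)) - (6 + 6 * (n - 5))\<^sup>2
       < n * (3 * (25/4) + 36/25 + c\<^sup>2 + (n - 5) * (289/4)) - (-15/2 + 6/5 + c + (n - 5) * (17/2))\<^sup>2"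
proof -
  define m where "m = n - 8"
  have "0 \<le> m" "n = m + 8" using n by (auto simp: m_def)
  have "m + 5 \<noteq> 0" using \<open>0 \<le> m\<close> by simp
  then have cm: "c * (m + 5) = 6 * m + 24"
    by (simp add: c \<open>n = m + 8\<close> field_simps)
  define E where "E = (n * (3 * (25/4) + 36/25 + c\<^sup>2 + (n - 5) * (289/4))
      - (-15/2 + 6/5 + c + (n - 5) * (17/2))\<^sup>2) - (n * (146 + 36 * (n - 5)) - (6 + 6 * (n - 5))\<^sup>2)"
  \<comment> \<open>clearing the denominator of c leaves a cubic in m with positive coefficients\<close>
  have "E * (m + 5)\<^sup>2 = (n - 1) * (c * (m + 5))\<^sup>2
      - 2 * (-15/2 + 6/5 + (n - 5) * (17/2)) * (c * (m + 5)) * (m + 5)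
      + (n * (3 * (25/4) + 36/25 + (n - 5) * (289/4)) - (-15/2 + 6/5 + (n - 5) * (17/2))\<^sup>2
         - (n * (146 + 36 * (n - 5)) - (6 + 6 * (n - 5))\<^sup>2)) * (m + 5)\<^sup>2"
    unfolding E_def power2_eq_square by algebra
  also have "\<dots> = 1196 + 50507/10 * m + 45197/25 * m\<^sup>2 + 8427/50 * m ^ 3"
    unfolding cm \<open>n = m + 8\<close> power2_eq_square power3_eq_cube by algebra
  also have "\<dots> > 0"
    using \<open>0 \<le> m\<close> by (simp add: add_pos_nonneg)
  finally have "0 < E * (m + 5)\<^sup>2" .
  then show ?thesis by (simp add: E_def zero_less_mult_iff)
qed

context
  fixes u1 u2 u3 h1 h2 :: "'n::finite"
  assumes distinct: "distinct [u1, u2, u3, h1, h2]"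
begin

definition double_star :: "'n \<Rightarrow> 'n set" where
  "double_star i =
    (if i \<in> {u1, u2, u3} then {i, h1}
     else if i = h1 then {u1, u2, u3, h1, h2}
     else if i = h2 then UNIV - {u1, u2, u3}
     else {i, h2})"

definition double_star_witness :: "real^'n" where
  "double_star_witness =
    (\<chi> j. if j \<in> {u1, u2, u3} then 0 else if j = h1 then -5 else if j = h2 then 11 else 6)"

lemma double_star_equal_neighbor_matrices:
  "neighbor_average double_star \<in> equal_neighbor_matrices"
proof (rule neighbor_average_equal_neighbor_matrices)
  show "i \<in> double_star i" for i
    by (simp add: double_star_def)
  show sym: "j \<in> double_star i \<longleftrightarrow> i \<in> double_star j" for i j
    using distinct by (auto simp: double_star_def)
  let ?R = "{(a, b). b \<in> double_star a}"
  have "(h1, h2) \<in> ?R" "(i, h1) \<in> ?R" if "i \<in> {u1, u2, u3}" for i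
    using that distinct by (auto simp: double_star_def)
  moreover have "(i, h2) \<in> ?R" if "i \<notin> {u1, u2, u3}" for i
    using distinct that by (auto simp: double_star_def)
  ultimately have to_h2: "(i, h2) \<in> ?R\<^sup>*" for i
    by (metis converse_rtrancl_into_rtrancl r_into_rtrancl)
  have "?R\<inverse> = ?R" using sym by auto
  then have "(h2, j) \<in> ?R\<^sup>*" for j
    using to_h2[of j] by (metis rtrancl_converseI)
  then show "(i, j) \<in> ?R\<^sup>*" for i j
    using to_h2 by (meson rtrancl_trans)
qed

lemma sum_UNIV_double_star:
  fixes f :: "'n \<Rightarrow> real"
  shows "(\<Sum>j\<in>UNIV. f j)
    = f u1 + f u2 + f u3 + f h1 + f h2 + (\<Sum>j\<in>UNIV - {u1, u2, u3, h1, h2}. f j)"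
  using distinct sum.subset_diff[of "{u1, u2, u3, h1, h2}" UNIV f] by (simp add: add_ac)

lemma card_double_star_rest:
  "real (card (UNIV - {u1, u2, u3, h1, h2})) = real CARD('n) - 5"
proof -
  have "card {u1, u2, u3, h1, h2} = 5" using distinct by simp
  moreover have "card {u1, u2, u3, h1, h2} \<le> CARD('n)" by (rule card_mono) auto
  ultimately show ?thesis by (simp add: card_Diff_subset of_nat_diff)
qed

lemma scaled_variance_double_star_witness:
  "scaled_variance double_star_witness
     = real CARD('n) * (146 + 36 * (real CARD('n) - 5)) - (6 + 6 * (real CARD('n) - 5))\<^sup>2"
proof -
  have "double_star_witness $ j = 6" if "j \<in> UNIV - {u1, u2, u3, h1, h2}" for j
    using that by (simp add: double_star_witness_def)
  moreover have "double_star_witness $ u1 = 0" "double_star_witness $ u2 = 0" "double_star_witness $ u3 = 0"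
    "double_star_witness $ h1 = -5" "double_star_witness $ h2 = 11"
    using distinct by (auto simp: double_star_witness_def)
  ultimately show ?thesis
    unfolding scaled_variance_def sum_UNIV_double_star
    by (simp add: card_double_star_rest power2_eq_square algebra_simps)
qed

lemma neighbor_average_double_star_witness:
  "(neighbor_average double_star *v double_star_witness) $ j =
     (if j \<in> {u1, u2, u3} then -5/2 else if j = h1 then 6/5
      else if j = h2 then (6 + 6 * (real CARD('n) - 5)) / (real CARD('n) - 3) else 17/2)"
proof -
  let ?R = "UNIV - {u1, u2, u3, h1, h2}"
  have x: "double_star_witness $ j = (if j \<in> {u1, u2, u3} then 0 else if j = h1 then -5
      else if j = h2 then 11 else 6)" for j
    by (simp add: double_star_witness_def)
  have h2_nbhd: "double_star h2 = insert h1 (insert h2 ?R)"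
    using distinct by (auto simp: double_star_def)
  have "(\<Sum>j\<in>?R. double_star_witness $ j) = (\<Sum>j\<in>?R. 6)"
    by (intro sum.cong) (auto simp: x)
  also have "\<dots> = (real CARD('n) - 5) * 6"
    by (simp only: sum_constant card_double_star_rest)
  finally have "(\<Sum>j\<in>?R. double_star_witness $ j) = (real CARD('n) - 5) * 6" .
  moreover have "double_star_witness $ h1 = -5" "double_star_witness $ h2 = 11"
    using distinct by (auto simp: x)
  moreover have "h1 \<notin> insert h2 ?R" "h2 \<notin> ?R" using distinct by auto
  ultimately have "(\<Sum>j\<in>double_star h2. double_star_witness $ j) = 6 + 6 * (real CARD('n) - 5)"
    by (simp add: h2_nbhd)
  moreover have "real (card (double_star h2)) = real CARD('n) - 3"
    using \<open>h1 \<notin> insert h2 ?R\<close> \<open>h2 \<notin> ?R\<close> card_double_star_rest by (simp add: h2_nbhd)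
  ultimately have "(neighbor_average double_star *v double_star_witness) $ h2
      = (6 + 6 * (real CARD('n) - 5)) / (real CARD('n) - 3)"
    by (simp add: neighbor_average_mult)
  moreover have "double_star j = {j, h1}" "j \<noteq> h1" if "j \<in> {u1, u2, u3}"
    using that distinct by (auto simp: double_star_def)
  moreover have "double_star j = {j, h2}" "j \<noteq> h2" if "j \<notin> {u1, u2, u3, h1, h2}"
    using that by (auto simp: double_star_def)
  moreover have "double_star h1 = {u1, u2, u3, h1, h2}"
    using distinct by (auto simp: double_star_def)
  ultimately show ?thesis
    using distinct by (auto simp: neighbor_average_mult x)
qed

lemma double_star_increases_scaled_variance:
  assumes "8 \<le> CARD('n)"
  shows "scaled_variance double_star_witness
    < scaled_variance (neighbor_average double_star *v double_star_witness)"
proof -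
  define n c where "n = real CARD('n)" and "c = (6 + 6 * (n - 5)) / (n - 3)"
  define y where "y = neighbor_average double_star *v double_star_witness"
  have rest: "y $ j = 17/2" if "j \<in> UNIV - {u1, u2, u3, h1, h2}" for j
    using that by (simp add: y_def neighbor_average_double_star_witness)
  have core: "y $ u1 = -5/2" "y $ u2 = -5/2" "y $ u3 = -5/2" "y $ h1 = 6/5" "y $ h2 = c"
    using distinct by (auto simp: y_def c_def n_def neighbor_average_double_star_witness)
  have "(\<Sum>j\<in>UNIV. y $ j) = 3 * (-5/2) + 6/5 + c + (n - 5) * (17/2)"
    unfolding sum_UNIV_double_star by (simp add: core rest card_double_star_rest n_def)
  moreover have "(\<Sum>j\<in>UNIV. (y $ j)\<^sup>2) = 3 * (25/4) + 36/25 + c\<^sup>2 + (n - 5) * (289/4)"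
    unfolding sum_UNIV_double_star by (simp add: core rest card_double_star_rest n_def power2_eq_square)
  moreover have "8 \<le> n" using assms by (simp add: n_def)
  ultimately show ?thesis
    using double_star_variance_gain[OF _ c_def] scaled_variance_double_star_witness
    by (simp add: scaled_variance_def y_def n_def)
qed

end

lemma obtain_five_distinct:
  assumes "5 \<le> CARD('n)"
  obtains u1 u2 u3 h1 h2 :: "'n::finite" where "distinct [u1, u2, u3, h1, h2]"
proof -
  obtain xs :: "'n list" where xs: "set xs = UNIV" "distinct xs"
    using finite_distinct_list[of "UNIV :: 'n set"] by auto
  define ys where "ys = take 5 xs"
  have "length ys = Suc (Suc (Suc (Suc (Suc 0))))"
    using distinct_card[OF xs(2)] xs(1) assms by (simp add: ys_def)
  then obtain a b c d e where "ys = [a, b, c, d, e]"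
    by (auto simp: length_Suc_conv)
  moreover have "distinct ys" using xs(2) by (simp add: ys_def)
  ultimately show thesis using that by simp
qed

theorem theorem2:
  assumes "CARD('n::finite) \<ge> 8"
  shows "(Q_class :: (real^'n \<Rightarrow> real) set) = {}"
proof -
  have "5 \<le> CARD('n)" using assms by simp
  then obtain u1 u2 u3 h1 h2 :: 'n where distinct: "distinct [u1, u2, u3, h1, h2]"
    by (rule obtain_five_distinct)
  let ?A = "neighbor_average (double_star u1 u2 u3 h1 h2)"
  let ?x = "double_star_witness u1 u2 u3 h1 h2"
  have "?A \<in> equal_neighbor_matrices"
    using double_star_equal_neighbor_matrices[OF distinct] .
  moreover have "scaled_variance ?x < scaled_variance (?A *v ?x)"
    using double_star_increases_scaled_variance[OF distinct assms] .
  ultimately show ?thesis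
    using Q_class_imp_scaled_variance_nonincreasing by (meson equals0I not_le)
qed

end
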